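(* Let $\Omega_n=\dfrac{\pi^{n/2}}{\Gamma\left(\frac n2+1\right)}$ for $n\in\mathbb{N}_0$, and for $j\in\mathbb{N}$ let \[ \lambda_j=(-1)^j\left\{2B_{j+1}(1)-B_{j+1}\left(\tfrac12\right)-B_{j+1}\left(\tfrac32\right)\right\}\frac{2^j}{j(j+1)}, \] where $B_m(x)$ are the Bernoulli polynomials. Let $t_0=\frac12$ and let $t_1,t_2,\dots$ be the solution of the infinite system \[ \sum_{j=1}^m(-1)^{j+1}\frac{t_{m-j}}{j}=\lambda_m\qquad(m\in\mathbb{N}). \] Then, as $n\to\infty$, the following asymptotic formula holds: \[ \frac{\Omega_n^2}{\Omega_{n-1}\Omega_{n+1}}\sim\left(1+\frac1n\right)^{\sum_{j=0}^\infty\frac{t_j}{n^j}}. \]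
   Context: $\Omega_n$ is the volume of the unit ball in $\mathbb{R}^n$; $\Gamma$ is Euler's gamma function. The Bernoulli polynomials are defined by $\frac{te^{xt}}{e^t-1}=\sum_{m\ge0}B_m(x)\frac{t^m}{m!}$. The formula is understood as an asymptotic expansion: for every $N$, $\ln\frac{\Omega_n^2}{\Omega_{n-1}\Omega_{n+1}}-\ln\left(1+\frac1n\right)\sum_{j=0}^{N}t_jn^{-j}=O(n^{-N-2})$ as $n\to\infty$. *)

theory Defs
  imports "HOL-Analysis.Analysis" "HOL-Computational_Algebra.Formal_Power_Series"
    "HOL-Library.Landau_Symbols"
begin

text \<open>Bernoulli polynomials via their exponential generating function
  t e^{xt} / (e^t - 1) = sum_m B_m(x) t^m / m!, read as a formal power series in t.\<close>
definition bernoulli_poly :: "nat \<Rightarrow> real \<Rightarrow> real" where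
  "bernoulli_poly m x =
     fact m * fps_nth (fps_X * fps_exp x / (fps_exp 1 - 1)) m"

text \<open>Volume of the unit ball in R^n.\<close>
definition Omega :: "nat \<Rightarrow> real" where
  "Omega n = pi powr (real n / 2) / Gamma (real n / 2 + 1)"

definition lambda_coeff :: "nat \<Rightarrow> real" where
  "lambda_coeff j = (-1) ^ j *
     (2 * bernoulli_poly (j + 1) 1 - bernoulli_poly (j + 1) (1/2)
        - bernoulli_poly (j + 1) (3/2)) * 2 ^ j / (real j * (real j + 1))"

end

theory Submission
  imports Defs
begin

text \<open>Let \<open>d n = ln \<Gamma>(n/2 + 1/2) + ln \<Gamma>(n/2 + 3/2) - 2 ln \<Gamma>(n/2 + 1)\<close>, the logarithm of
  the volume ratio. The functional equation of \<open>\<Gamma>\<close> gives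
  \<open>d (n + 2) - d n = ln (1 + 1/n) + ln (1 + 3/n) - 2 ln (1 + 2/n)\<close>, and log-convexity of
  \<open>\<Gamma>\<close> gives \<open>0 \<le> d n \<le> 1/n\<close>. A generating-function identity for the Bernoulli
  polynomials shows that the partial sums \<open>P\<^sub>M n\<close> of \<open>\<Sum> \<lambda>\<^sub>k / n\<^sup>k\<close> satisfy the same
  step equation up to \<open>O(1 / n\<^sup>M\<^sup>+\<^sup>2)\<close>; since \<open>d\<close> and \<open>P\<^sub>M\<close> both tend to \<open>0\<close>, summing the
  steps gives \<open>d = P\<^sub>M + O(1 / n\<^sup>M\<^sup>+\<^sup>1)\<close>. Finally, the system defining the \<open>t\<^sub>j\<close> says
  that the Cauchy product of \<open>ln (1 + x) = \<Sum> (-1)\<^sup>i\<^sup>+\<^sup>1 x\<^sup>i / i\<close> and \<open>\<Sum> t\<^sub>j x\<^sup>j\<close> has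
  coefficients \<open>\<lambda>\<^sub>m\<close>.\<close>

lemma bigo_eventually_cong:
  assumes "f \<in> O[F](h)" "eventually (\<lambda>x. f x = g x) F"
  shows "g \<in> O[F](h)"
  using assms landau_o.big.in_cong by blast

lemma inverse_power_bigo:
  assumes "a \<le> b"
  shows "(\<lambda>n::nat. 1 / real n ^ b) \<in> O(\<lambda>n. 1 / real n ^ a)"
proof (rule bigoI[where c=1], rule eventually_sequentiallyI[of 1])
  fix n :: nat assume "1 \<le> n"
  then have "real n ^ a \<le> real n ^ b" "0 < real n ^ a"
    using assms by (auto intro: power_increasing)
  then show "norm (1 / real n ^ b) \<le> 1 * norm (1 / real n ^ a)"
    by (simp add: frac_le)
qed

lemma power_series_remainder_bound:
  fixes a :: "nat \<Rightarrow> real"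
  assumes sums: "(\<lambda>i. a i * x ^ i) sums f"
    and coeff: "\<And>i. \<bar>a i\<bar> \<le> C * R ^ i"
    and x: "x \<ge> 0" "R \<ge> 0" "R * x \<le> 1/2"
  shows "\<bar>f - (\<Sum>i\<le>L. a i * x ^ i)\<bar> \<le> 2 * C * (R * x) ^ Suc L"
proof -
  define y where "y = R * x"
  have y: "0 \<le> y" "y \<le> 1/2" using x by (simp_all add: y_def)
  have "C \<ge> 0" using coeff[of 0] by simp
  have tail: "(\<lambda>i. a (i + Suc L) * x ^ (i + Suc L)) sums (f - (\<Sum>i\<le>L. a i * x ^ i))"
    using sums sums_iff_shift[of "\<lambda>i. a i * x ^ i" "Suc L"] by (simp add: lessThan_Suc_atMost)
  have geom: "(\<lambda>i. C * y ^ Suc L * y ^ i) sums (C * y ^ Suc L / (1 - y))"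
    using y sums_mult[OF geometric_sums, of y "C * y ^ Suc L"] by simp
  have "\<bar>a (i + Suc L) * x ^ (i + Suc L)\<bar> \<le> C * y ^ Suc L * y ^ i" for i
  proof -
    have "\<bar>a (i + Suc L) * x ^ (i + Suc L)\<bar> \<le> C * R ^ (i + Suc L) * x ^ (i + Suc L)"
      using coeff[of "i + Suc L"] x by (simp add: abs_mult mult_right_mono)
    also have "\<dots> = C * y ^ Suc L * y ^ i"
      by (simp add: y_def power_mult_distrib power_add mult_ac)
    finally show ?thesis .
  qed
  then have "\<bar>\<Sum>i. a (i + Suc L) * x ^ (i + Suc L)\<bar> \<le> (\<Sum>i. C * y ^ Suc L * y ^ i)"
    using norm_suminf_le[of "\<lambda>i. a (i + Suc L) * x ^ (i + Suc L)"] sums_summable[OF geom]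
    by simp
  then have "\<bar>f - (\<Sum>i\<le>L. a i * x ^ i)\<bar> \<le> C * y ^ Suc L / (1 - y)"
    using sums_unique[OF tail] sums_unique[OF geom] by simp
  also have "\<dots> \<le> C * y ^ Suc L * 2"
  proof -
    have "1 / (1 - y) \<le> 2" using y by (simp add: field_simps)
    then show ?thesis
      using mult_left_mono[of "1 / (1 - y)" 2 "C * y ^ Suc L"] y \<open>C \<ge> 0\<close> by simp
  qed
  finally show ?thesis by (simp add: y_def mult_ac)
qed

lemma power_series_remainder_bigo:
  fixes a :: "nat \<Rightarrow> real"
  assumes r: "r > 0" and sums: "\<And>x. \<bar>x\<bar> \<le> r \<Longrightarrow> (\<lambda>i. a i * x ^ i) sums f x"
    and coeff: "\<And>i. \<bar>a i\<bar> \<le> C * R ^ i" and R: "R > 0"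
  shows "(\<lambda>n::nat. f (1 / real n) - (\<Sum>i\<le>L. a i / real n ^ i)) \<in> O(\<lambda>n. 1 / real n ^ Suc L)"
proof (rule bigoI[where c="2 * C * R ^ Suc L"],
       rule eventually_sequentiallyI[of "nat \<lceil>max (1 / r) (2 * R)\<rceil> + 1"])
  fix n :: nat assume "nat \<lceil>max (1 / r) (2 * R)\<rceil> + 1 \<le> n"
  then have n: "real n > 0" "1 / r \<le> real n" "2 * R \<le> real n" by linarith+
  then have "\<bar>1 / real n\<bar> \<le> r" "R * (1 / real n) \<le> 1/2"
    using r by (simp_all add: field_simps)
  then have "\<bar>f (1 / real n) - (\<Sum>i\<le>L. a i * (1 / real n) ^ i)\<bar> \<le> 2 * C * (R * (1 / real n)) ^ Suc L"
    using n R by (intro power_series_remainder_bound sums coeff) auto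
  moreover have "(R * (1 / real n)) ^ Suc L = R ^ Suc L * (1 / real n ^ Suc L)"
    by (simp add: power_mult_distrib power_divide)
  moreover have "(\<Sum>i\<le>L. a i * (1 / real n) ^ i) = (\<Sum>i\<le>L. a i / real n ^ i)"
    by (simp add: power_one_over)
  ultimately show "norm (f (1 / real n) - (\<Sum>i\<le>L. a i / real n ^ i))
      \<le> 2 * C * R ^ Suc L * norm (1 / real n ^ Suc L)"
    by (simp only: real_norm_def power_abs abs_divide abs_one abs_of_nat mult.assoc)
qed

lemma truncated_product_bigo:
  fixes a b :: "nat \<Rightarrow> real"
  shows "(\<lambda>n::nat. (\<Sum>i\<le>K. a i / real n ^ i) * (\<Sum>j\<le>K. b j / real n ^ j)
            - (\<Sum>m\<le>K. (\<Sum>i\<le>m. a i * b (m - i)) / real n ^ m)) \<in> O(\<lambda>n. 1 / real n ^ Suc K)"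
proof -
  define a' b' where "a' i = (if i \<le> K then a i else 0)" and "b' i = (if i \<le> K then b i else 0)"
    for i
  define c where "c r = (\<Sum>i\<le>r. a' i * b' (r - i))" for r
  have "(\<Sum>i\<le>K. a i / real n ^ i) * (\<Sum>j\<le>K. b j / real n ^ j)
          = (\<Sum>i\<le>K. a' i * (1 / real n) ^ i) * (\<Sum>j\<le>K. b' j * (1 / real n) ^ j)" for n
    by (simp add: a'_def b'_def power_one_over)
  also have "\<dots> n = (\<Sum>r\<le>K + K. c r * (1 / real n) ^ r)" for n
    unfolding c_def by (rule polynomial_product) (simp_all add: a'_def b'_def)
  finally have product: "(\<Sum>i\<le>K. a i / real n ^ i) * (\<Sum>j\<le>K. b j / real n ^ j)
                           = (\<Sum>r\<le>K + K. c r * (1 / real n) ^ r)" for n .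
  have "(\<Sum>m\<le>K. (\<Sum>i\<le>m. a i * b (m - i)) / real n ^ m) = (\<Sum>r\<le>K. c r * (1 / real n) ^ r)" for n
    by (intro sum.cong refl)
       (auto simp: c_def a'_def b'_def power_one_over sum_divide_distrib intro!: sum.cong)
  with product have "(\<lambda>n::nat. (\<Sum>i\<le>K. a i / real n ^ i) * (\<Sum>j\<le>K. b j / real n ^ j)
            - (\<Sum>m\<le>K. (\<Sum>i\<le>m. a i * b (m - i)) / real n ^ m))
          = (\<lambda>n. \<Sum>r\<in>{..K + K} - {..K}. c r * (1 / real n) ^ r)"
    by (simp add: sum_diff)
  also have "\<dots> \<in> O(\<lambda>n. 1 / real n ^ Suc K)"
  proof (intro big_sum_in_bigo)
    fix r assume "r \<in> {..K + K} - {..K}"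
    then have "(\<lambda>n::nat. 1 / real n ^ r) \<in> O(\<lambda>n. 1 / real n ^ Suc K)"
      by (intro inverse_power_bigo) auto
    then show "(\<lambda>n::nat. c r * (1 / real n) ^ r) \<in> O(\<lambda>n. 1 / real n ^ Suc K)"
      by (simp add: divide_inverse power_inverse)
  qed
  finally show ?thesis .
qed

lemma inverse_square_le_telescoping:
  fixes m :: real
  assumes "m \<ge> 2"
  shows "1 / m\<^sup>2 \<le> 1 / (2 * (m - 1)) - 1 / (2 * (m + 1))"
proof -
  have "1 / (2 * (m - 1)) - 1 / (2 * (m + 1)) = 1 / ((m - 1) * (m + 1))"
    using assms by (simp add: divide_simps) (simp add: algebra_simps)
  also have "1 / m\<^sup>2 \<le> 1 / ((m - 1) * (m + 1))"
    using assms mult_mono[of 2 m 2 m]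
    by (intro divide_left_mono) (auto simp: power2_eq_square algebra_simps)
  finally show ?thesis .
qed

lemma bound_from_step2_differences:
  fixes e :: "nat \<Rightarrow> real"
  assumes lim: "e \<longlonglongrightarrow> 0" and B: "B \<ge> 0" and n: "n \<ge> 2"
    and step: "\<And>m. m \<ge> n \<Longrightarrow> \<bar>e (m + 2) - e m\<bar> \<le> B / (real m)\<^sup>2"
  shows "\<bar>e n\<bar> \<le> B / real n"
proof -
  have partial: "\<bar>e n - e (n + 2 * K)\<bar> \<le> B * (1 / (2 * (real n - 1)) - 1 / (2 * (real (n + 2 * K) - 1)))"
    for K
  proof (induction K)
    case (Suc K)
    define m where "m = real (n + 2 * K)"
    have "m \<ge> 2" using n by (simp add: m_def)
    have "\<bar>e (n + 2 * K + 2) - e (n + 2 * K)\<bar> \<le> B * (1 / m\<^sup>2)"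
      using step[of "n + 2 * K"] by (simp add: m_def)
    also have "\<dots> \<le> B * (1 / (2 * (m - 1)) - 1 / (2 * (m + 1)))"
      using B inverse_square_le_telescoping[OF \<open>m \<ge> 2\<close>] by (rule mult_left_mono[rotated])
    finally show ?case
      using Suc.IH by (simp add: m_def algebra_simps)
  qed simp
  have "\<bar>e n\<bar> - B / (2 * (real n - 1)) \<le> \<bar>e (n + 2 * K)\<bar>" for K
  proof -
    have "B * (1 / (2 * (real (n + 2 * K) - 1))) \<ge> 0" using B n by simp
    then show ?thesis using partial[of K] by (simp add: algebra_simps)
  qed
  moreover have "(\<lambda>K. \<bar>e (n + 2 * K)\<bar>) \<longlonglongrightarrow> 0"
  proof -
    have "strict_mono (\<lambda>K. n + 2 * K)" by (auto simp: strict_mono_def)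
    from LIMSEQ_subseq_LIMSEQ[OF lim this] show ?thesis
      by (auto simp: o_def intro: tendsto_rabs_zero)
  qed
  ultimately have "\<bar>e n\<bar> \<le> B / (2 * (real n - 1))"
    using LIMSEQ_le_const[of _ 0] by force
  also have "\<dots> \<le> B / real n"
    using B n by (intro divide_left_mono) auto
  finally show ?thesis .
qed

lemma bigo_from_step2_differences:
  fixes e :: "nat \<Rightarrow> real"
  assumes lim: "e \<longlonglongrightarrow> 0"
    and diff: "(\<lambda>n. e (n + 2) - e n) \<in> O(\<lambda>n. 1 / real n ^ (M + 2))"
  shows "e \<in> O(\<lambda>n. 1 / real n ^ (M + 1))"
proof -
  from diff obtain c where c: "c > 0"
    and "eventually (\<lambda>n. norm (e (n + 2) - e n) \<le> c * norm (1 / real n ^ (M + 2))) sequentially"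
    by (elim landau_o.bigE) auto
  then obtain N where N: "\<And>n. n \<ge> N \<Longrightarrow> \<bar>e (n + 2) - e n\<bar> \<le> c / real n ^ (M + 2)"
    by (auto simp: eventually_sequentially)
  show ?thesis
  proof (rule bigoI[where c=c], rule eventually_sequentiallyI[of "max N 2"])
    fix n assume n: "max N 2 \<le> n"
    have "\<bar>e (m + 2) - e m\<bar> \<le> (c / real n ^ M) / (real m)\<^sup>2" if "m \<ge> n" for m
    proof -
      have "c / real m ^ (M + 2) = (c / real m ^ M) / (real m)\<^sup>2"
        by (simp add: power_add power2_eq_square)
      also have "\<dots> \<le> (c / real n ^ M) / (real m)\<^sup>2"
        using c n that by (intro divide_right_mono divide_left_mono power_mono) auto
      finally show ?thesis using N[of m] n that by simp
    qed
    then have "\<bar>e n\<bar> \<le> (c / real n ^ M) / real n"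
      using c n by (intro bound_from_step2_differences[OF lim]) auto
    then show "norm (e n) \<le> c * norm (1 / real n ^ (M + 1))"
      by (simp add: mult.commute)
  qed
qed

section \<open>Elementary expansions in powers of 1/n\<close>

definition ln_one_plus_coeff :: "real \<Rightarrow> nat \<Rightarrow> real" where
  "ln_one_plus_coeff c i = - ((- c) ^ i) / real i"

lemma ln_one_plus_expansion:
  assumes c: "c > 0"
  shows "(\<lambda>n::nat. ln (1 + c / real n) - (\<Sum>i=1..L. ln_one_plus_coeff c i / real n ^ i))
           \<in> O(\<lambda>n. 1 / real n ^ Suc L)"
proof -
  have "(\<lambda>n::nat. ln (1 + c * (1 / real n)) - (\<Sum>i\<le>L. ln_one_plus_coeff c i / real n ^ i))
          \<in> O(\<lambda>n. 1 / real n ^ Suc L)"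
  proof (rule power_series_remainder_bigo[where r="1 / (2 * c)" and C=1 and R=c])
    fix x :: real assume "\<bar>x\<bar> \<le> 1 / (2 * c)"
    then have "\<bar>c * x\<bar> < 1" using c by (simp add: abs_mult field_simps)
    from ln_series'[OF this]
    show "(\<lambda>i. ln_one_plus_coeff c i * x ^ i) sums ln (1 + c * x)"
      by (simp add: ln_one_plus_coeff_def power_minus[of "c * x"] power_minus[of c]
          power_mult_distrib mult.assoc)
  next
    fix i :: nat
    show "\<bar>ln_one_plus_coeff c i\<bar> \<le> 1 * c ^ i"
      using c by (cases "i = 0") (auto simp: ln_one_plus_coeff_def abs_mult power_abs divide_le_eq)
  qed (use c in auto)
  then show ?thesis
    by (simp add: atMost_atLeast0 sum.atLeast_Suc_atMost ln_one_plus_coeff_def)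
qed

lemma one_plus_two_powr_expansion:
  assumes k: "k \<ge> 1"
  shows "(\<lambda>n::nat. (1 + 2 * (1 / real n)) powr (- real k)
            - (\<Sum>i\<le>L. (- real k gchoose i) * 2 ^ i / real n ^ i)) \<in> O(\<lambda>n. 1 / real n ^ Suc L)"
proof (rule power_series_remainder_bigo[where r="1/4" and C="2 ^ k" and R=4])
  fix x :: real assume "\<bar>x\<bar> \<le> 1/4"
  then have "\<bar>2 * x\<bar> < 1" by (simp add: abs_mult)
  from gen_binomial_real[OF this, of "- real k"]
  show "(\<lambda>i. (- real k gchoose i) * 2 ^ i * x ^ i) sums (1 + 2 * x) powr (- real k)"
    by (simp add: power_mult_distrib mult_ac)
next
  fix i :: nat
  have "\<bar>- real k gchoose i\<bar> = \<bar>real k + real i - 1 gchoose i\<bar>"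
    by (simp add: gbinomial_minus abs_mult)
  also have "real k + real i - 1 = real (k + i - 1)"
    using k by simp
  also have "\<bar>real (k + i - 1) gchoose i\<bar> = real ((k + i - 1) choose i)"
    by (simp flip: binomial_gbinomial)
  also have "\<dots> \<le> real (2 ^ (k + i - 1))"
    using binomial_le_pow2[of "k + i - 1" i] by (simp only: of_nat_le_iff)
  also have "\<dots> \<le> 2 ^ k * 2 ^ i"
    by (simp add: power_increasing flip: power_add)
  finally have "\<bar>(- real k gchoose i) * 2 ^ i\<bar> \<le> 2 ^ k * 2 ^ i * 2 ^ i"
    by (simp add: abs_mult)
  also have "\<dots> = 2 ^ k * 4 ^ i"
    by (simp flip: power_mult_distrib)
  finally show "\<bar>(- real k gchoose i) * 2 ^ i\<bar> \<le> 2 ^ k * 4 ^ i" .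
qed auto

text \<open>The coefficient of \<open>n\<^sup>-\<^sup>j\<close> in the expansion of \<open>(n + 2)\<^sup>-\<^sup>k\<close>.\<close>
definition shift_coeff :: "nat \<Rightarrow> nat \<Rightarrow> real" where
  "shift_coeff k j = (if k \<le> j then (- real k gchoose (j - k)) * 2 ^ (j - k) else 0)"

lemma shift_coeff_eq:
  assumes "1 \<le> k" "k \<le> j"
  shows "shift_coeff k j = (-1) ^ (j - k) * 2 ^ (j - k) * fact (j - 1) / (fact (j - k) * fact (k - 1))"
proof -
  have "real k + real (j - k) - 1 = real (j - 1)" using assms by simp
  then have "- real k gchoose (j - k) = (-1) ^ (j - k) * real ((j - 1) choose (j - k))"
    by (simp add: gbinomial_minus binomial_gbinomial)
  also have "real ((j - 1) choose (j - k)) = fact (j - 1) / (fact (j - k) * fact (k - 1))"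
    using assms by (simp add: binomial_fact Suc_diff_le)
  finally show ?thesis using assms by (simp add: shift_coeff_def)
qed

lemma shift_coeff_sum_eq:
  assumes "1 \<le> k" "k \<le> M"
  shows "(\<Sum>j=1..M. shift_coeff k j / real n ^ j)
       = 1 / real n ^ k * (\<Sum>i\<le>M - k. (- real k gchoose i) * 2 ^ i / real n ^ i)"
proof -
  have "(\<Sum>j=1..M. shift_coeff k j / real n ^ j) = (\<Sum>j=k..M. shift_coeff k j / real n ^ j)"
    using assms by (intro sum.mono_neutral_right) (auto simp: shift_coeff_def)
  also have "\<dots> = (\<Sum>i=0..M - k. shift_coeff k (k + i) / real n ^ (k + i))"
    using assms by (subst sum.atLeastAtMost_shift_0) auto
  also have "\<dots> = 1 / real n ^ k * (\<Sum>i\<le>M - k. (- real k gchoose i) * 2 ^ i / real n ^ i)"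
    by (simp add: atMost_atLeast0 sum_distrib_left shift_coeff_def power_add)
  finally show ?thesis .
qed

lemma inverse_shifted_power_expansion:
  assumes k: "1 \<le> k" "k \<le> M"
  shows "(\<lambda>n::nat. 1 / real (n + 2) ^ k - (\<Sum>j=1..M. shift_coeff k j / real n ^ j))
           \<in> O(\<lambda>n. 1 / real n ^ Suc M)"
proof -
  have "(\<lambda>n::nat. 1 / real n ^ k * ((1 + 2 * (1 / real n)) powr (- real k)
           - (\<Sum>i\<le>M - k. (- real k gchoose i) * 2 ^ i / real n ^ i)))
         \<in> O(\<lambda>n. 1 / real n ^ k * (1 / real n ^ Suc (M - k)))"
    using k by (intro landau_o.big.mult_left one_plus_two_powr_expansion) simp
  also have "(\<lambda>n::nat. 1 / real n ^ k * (1 / real n ^ Suc (M - k))) = (\<lambda>n. 1 / real n ^ Suc M)"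
    using k by (simp add: power_add[symmetric] Suc_diff_le del: power_Suc)
  finally show ?thesis
  proof (rule bigo_eventually_cong)
    show "\<forall>\<^sub>F n in sequentially. 1 / real n ^ k * ((1 + 2 * (1 / real n)) powr (- real k)
           - (\<Sum>i\<le>M - k. (- real k gchoose i) * 2 ^ i / real n ^ i))
        = 1 / real (n + 2) ^ k - (\<Sum>j=1..M. shift_coeff k j / real n ^ j)"
    proof (rule eventually_sequentiallyI[of 1])
      fix n :: nat assume "1 \<le> n"
      then have "1 + 2 * (1 / real n) = real (n + 2) / real n"
        by (simp add: field_simps)
      then have "1 / real n ^ k * (1 + 2 * (1 / real n)) powr (- real k) = 1 / real (n + 2) ^ k"
        using \<open>1 \<le> n\<close> by (simp add: powr_minus powr_realpow power_divide)
      then show "1 / real n ^ k * ((1 + 2 * (1 / real n)) powr (- real k)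
             - (\<Sum>i\<le>M - k. (- real k gchoose i) * 2 ^ i / real n ^ i))
          = 1 / real (n + 2) ^ k - (\<Sum>j=1..M. shift_coeff k j / real n ^ j)"
        using shift_coeff_sum_eq[OF k, of n] by (simp add: right_diff_distrib)
    qed
  qed
qed

section \<open>The Gamma function side\<close>

lemma ln_Gamma_plus1:
  fixes z :: real
  assumes "z > 0"
  shows "ln (Gamma (z + 1)) = ln z + ln (Gamma z)"
proof -
  have "z \<notin> \<int>\<^sub>\<le>\<^sub>0" using assms by (auto elim!: nonpos_Ints_cases)
  then have "Gamma (z + 1) = z * Gamma z" by (rule Gamma_plus1)
  moreover have "Gamma z > 0" using assms by (rule Gamma_real_pos)
  then have "ln (z * Gamma z) = ln z + ln (Gamma z)" using assms by (intro ln_mult_pos)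
  ultimately show ?thesis by simp
qed

lemma ln_Gamma_midpoint_le:
  fixes x y :: real
  assumes "x > 0" "y > 0"
  shows "ln (Gamma ((x + y) / 2)) \<le> (ln (Gamma x) + ln (Gamma y)) / 2"
proof -
  have "(ln \<circ> Gamma) ((1 - 1/2) *\<^sub>R x + (1/2) *\<^sub>R y) \<le> (1 - 1/2) * (ln \<circ> Gamma) x + 1/2 * (ln \<circ> Gamma) y"
    using assms by (intro convex_onD[OF log_convex_Gamma_real]) auto
  moreover have "(1 - 1/2) *\<^sub>R x + (1/2) *\<^sub>R y = (x + y) / 2" by simp
  ultimately show ?thesis by (simp add: add_divide_distrib)
qed

definition ln_Gamma_defect :: "nat \<Rightarrow> real" where
  "ln_Gamma_defect n = ln (Gamma (real n / 2 + 1/2)) + ln (Gamma (real n / 2 + 3/2))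
                       - 2 * ln (Gamma (real n / 2 + 1))"

lemma ln_Omega_ratio_eq_ln_Gamma_defect:
  assumes "n \<ge> 1"
  shows "ln (Omega n ^ 2 / (Omega (n - 1) * Omega (n + 1))) = ln_Gamma_defect n"
proof -
  define a b c where "a = Gamma (real n / 2 + 1/2)" and "b = Gamma (real n / 2 + 3/2)"
    and "c = Gamma (real n / 2 + 1)"
  have pos: "a > 0" "b > 0" "c > 0" unfolding a_def b_def c_def by auto
  have pred: "Omega (n - 1) = pi powr ((real n - 1) / 2) / a"
    using assms unfolding Omega_def a_def by (simp add: of_nat_diff field_simps)
  have succ: "Omega (n + 1) = pi powr ((real n + 1) / 2) / b"
    unfolding Omega_def b_def by (simp add: field_simps)
  have mid: "Omega n = pi powr (real n / 2) / c"
    unfolding Omega_def c_def by simp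
  have "pi powr ((real n - 1) / 2) * pi powr ((real n + 1) / 2) = (pi powr (real n / 2))\<^sup>2"
    by (simp add: power2_eq_square flip: powr_add) (simp add: field_simps)
  then have "Omega n ^ 2 / (Omega (n - 1) * Omega (n + 1)) = a * b / c\<^sup>2"
    unfolding pred succ mid using pos by (simp add: field_simps power2_eq_square)
  then have "ln (Omega n ^ 2 / (Omega (n - 1) * Omega (n + 1))) = ln (a * b / c\<^sup>2)"
    by simp
  also have "ln (a * b / c\<^sup>2) = ln a + ln b - 2 * ln c"
    using pos by (simp add: ln_mult_pos ln_divide_pos ln_realpow)
  finally show ?thesis by (simp add: ln_Gamma_defect_def a_def b_def c_def)
qed

lemma ln_Gamma_defect_step:
  assumes "n \<ge> 1"
  shows "ln_Gamma_defect (n + 2) - ln_Gamma_defect n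
           = ln (1 + 1 / real n) + ln (1 + 3 / real n) - 2 * ln (1 + 2 / real n)"
proof -
  have shift: "real (n + 2) / 2 + a = (real n / 2 + a) + 1" for a by simp
  have "ln_Gamma_defect (n + 2) - ln_Gamma_defect n
          = ln (real n / 2 + 1/2) + ln (real n / 2 + 3/2) - 2 * ln (real n / 2 + 1)"
    unfolding ln_Gamma_defect_def shift by (subst (1 2 3) ln_Gamma_plus1) auto
  also have "\<dots> = ln (1 + 1 / real n) + ln (1 + 3 / real n) - 2 * ln (1 + 2 / real n)"
  proof -
    have "ln (real n / 2 + a / 2) = ln (1 + a / real n) + ln (real n / 2)" if "a > 0" for a
    proof -
      have "real n / 2 + a / 2 = (1 + a / real n) * (real n / 2)"
        using assms by (simp add: field_simps)
      also have "ln \<dots> = ln (1 + a / real n) + ln (real n / 2)"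
        using assms that by (intro ln_mult_pos) (auto intro: add_pos_pos)
      finally show ?thesis .
    qed
    from this[of 1] this[of 3] this[of 2] show ?thesis by simp
  qed
  finally show ?thesis .
qed

lemma ln_Gamma_defect_bounds:
  assumes n: "n \<ge> 1"
  shows "0 \<le> ln_Gamma_defect n" "ln_Gamma_defect n \<le> 1 / real n"
proof -
  define g where "g x = ln (Gamma x)" for x :: real
  define w where "w = real n / 2 + 1"
  have w: "w \<ge> 3/2" using n by (simp add: w_def)
  have defect: "ln_Gamma_defect n = g (w - 1/2) + g (w + 1/2) - 2 * g w"
    by (simp add: ln_Gamma_defect_def g_def w_def add_ac)
  have "g w \<le> (g (w - 1/2) + g (w + 1/2)) / 2"
    using ln_Gamma_midpoint_le[of "w - 1/2" "w + 1/2"] w by (simp add: g_def)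
  then show "0 \<le> ln_Gamma_defect n" by (simp add: defect)
  have "g (w + 1/2) \<le> (g w + g (w + 1)) / 2"
    using ln_Gamma_midpoint_le[of w "w + 1"] w by (simp add: g_def add_divide_distrib)
  moreover have "g (w - 1/2) \<le> (g (w - 1) + g w) / 2"
    using ln_Gamma_midpoint_le[of "w - 1" w] w by (simp add: g_def diff_divide_distrib)
  moreover have "g (w + 1) = ln w + g w" "g w = ln (w - 1) + g (w - 1)"
    using ln_Gamma_plus1[of w] ln_Gamma_plus1[of "w - 1"] w by (simp_all add: g_def)
  ultimately have "ln_Gamma_defect n \<le> (ln w - ln (w - 1)) / 2" by (simp add: defect)
  also have "ln w - ln (w - 1) \<le> w / (w - 1) - 1"
    using w ln_le_minus_one[of "w / (w - 1)"] by (simp add: ln_div)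
  also have "w / (w - 1) - 1 = 2 / real n"
    using n by (simp add: w_def field_simps)
  finally show "ln_Gamma_defect n \<le> 1 / real n" by simp
qed

lemma ln_Gamma_defect_tendsto_0: "ln_Gamma_defect \<longlonglongrightarrow> 0"
proof (rule tendsto_sandwich[of "\<lambda>_. 0" _ _ "\<lambda>n. 1 / real n"])
  show "\<forall>\<^sub>F n in sequentially. 0 \<le> ln_Gamma_defect n"
    "\<forall>\<^sub>F n in sequentially. ln_Gamma_defect n \<le> 1 / real n"
    using ln_Gamma_defect_bounds by (auto intro: eventually_sequentiallyI[of 1])
qed (simp_all add: lim_inverse_n')

definition defect_step_coeff :: "nat \<Rightarrow> real" where
  "defect_step_coeff j = ln_one_plus_coeff 1 j + ln_one_plus_coeff 3 j - 2 * ln_one_plus_coeff 2 j"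

lemma defect_step_expansion:
  "(\<lambda>n. (ln_Gamma_defect (n + 2) - ln_Gamma_defect n) - (\<Sum>j=1..M+1. defect_step_coeff j / real n ^ j))
     \<in> O(\<lambda>n. 1 / real n ^ (M + 2))"
proof -
  define r where "r = (\<lambda>c n. ln (1 + c / real n) - (\<Sum>i=1..M+1. ln_one_plus_coeff c i / real n ^ i))"
  have "r c \<in> O(\<lambda>n. 1 / real n ^ (M + 2))" if "c > 0" for c
    using ln_one_plus_expansion[OF that, of "M + 1"] by (simp add: r_def)
  then have "(\<lambda>n. r 1 n + r 3 n - 2 * r 2 n) \<in> O(\<lambda>n. 1 / real n ^ (M + 2))"
    by (intro sum_in_bigo) auto
  then show ?thesis
  proof (rule bigo_eventually_cong)
    show "\<forall>\<^sub>F n in sequentially. r 1 n + r 3 n - 2 * r 2 n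
            = (ln_Gamma_defect (n + 2) - ln_Gamma_defect n) - (\<Sum>j=1..M+1. defect_step_coeff j / real n ^ j)"
      using ln_Gamma_defect_step
      by (intro eventually_sequentiallyI[of 1])
         (simp add: r_def defect_step_coeff_def sum.distrib sum_subtractf
            sum_distrib_left add_divide_distrib diff_divide_distrib)
  qed
qed

section \<open>The Bernoulli polynomial identity\<close>

definition bernoulli_egf :: "real \<Rightarrow> real fps" where
  "bernoulli_egf x = fps_X * fps_exp x / (fps_exp 1 - 1)"

lemma bernoulli_egf_times_exp_minus_1: "bernoulli_egf x * (fps_exp 1 - 1) = fps_X * fps_exp x"
proof -
  have "fps_nth (fps_exp (1::real) - 1) 1 = 1" by simp
  then have "fps_exp (1::real) - 1 \<noteq> 0" "subdegree (fps_exp (1::real) - 1) \<le> 1"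
    by (auto intro: subdegree_leI)
  moreover have "fps_nth (fps_X * fps_exp x) 1 = 1" by simp
  then have "subdegree (fps_X * fps_exp x) \<ge> 1"
    by (intro subdegree_geI) auto
  ultimately show ?thesis
    unfolding bernoulli_egf_def by (intro fps_times_divide_eq) auto
qed

definition lambda_gf :: "real fps" where
  "lambda_gf = 2 * bernoulli_egf 1 - bernoulli_egf (1/2) - bernoulli_egf (3/2)"

lemma lambda_coeff_eq_lambda_gf:
  assumes "k \<ge> 1"
  shows "lambda_coeff k = (-1) ^ k * 2 ^ k * fact (k - 1) * fps_nth lambda_gf (k + 1)"
proof -
  have poly: "bernoulli_poly m x = fact m * fps_nth (bernoulli_egf x) m" for m x
    by (simp add: bernoulli_poly_def bernoulli_egf_def)
  have gf: "fps_nth lambda_gf m = 2 * fps_nth (bernoulli_egf 1) m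
              - fps_nth (bernoulli_egf (1/2)) m - fps_nth (bernoulli_egf (3/2)) m" for m
    unfolding lambda_gf_def mult_2 by simp
  define K where "K = real k * (real k + 1)"
  have "K \<noteq> 0" using assms by (simp add: K_def)
  have "(fact (k + 1) :: real) = K * fact (k - 1)"
    using assms by (cases k) (auto simp: K_def algebra_simps)
  then have "lambda_coeff k = (-1) ^ k * (K * fact (k - 1) * fps_nth lambda_gf (k + 1)) * 2 ^ k / K"
    unfolding lambda_coeff_def gf poly K_def by (simp add: algebra_simps)
  then show ?thesis using \<open>K \<noteq> 0\<close> by simp
qed

lemma lambda_gf_times_exp_minus_1_nth:
  "fps_nth (lambda_gf * (fps_exp 1 - 1)) (Suc j) = (2 - (1/2) ^ j - (3/2) ^ j) / fact j"
proof -
  have "lambda_gf * (fps_exp 1 - 1) = 2 * (bernoulli_egf 1 * (fps_exp 1 - 1))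
          - bernoulli_egf (1/2) * (fps_exp 1 - 1) - bernoulli_egf (3/2) * (fps_exp 1 - 1)"
    unfolding lambda_gf_def by (simp add: algebra_simps)
  also have "\<dots> = fps_X * (2 * fps_exp 1 - fps_exp (1/2) - fps_exp (3/2))"
    unfolding bernoulli_egf_times_exp_minus_1 by (simp add: algebra_simps)
  finally have "lambda_gf * (fps_exp 1 - 1) = fps_X * (2 * fps_exp 1 - fps_exp (1/2) - fps_exp (3/2))" .
  then show ?thesis by (simp add: diff_divide_distrib)
qed

lemma lambda_gf_nth_0: "fps_nth lambda_gf 0 = 0"
  using lambda_gf_times_exp_minus_1_nth[of 0] by (simp add: fps_mult_nth)

lemma lambda_gf_nth_1: "fps_nth lambda_gf 1 = 0"
  using lambda_gf_times_exp_minus_1_nth[of 1]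
  by (simp add: fps_mult_nth numeral_2_eq_2 lambda_gf_nth_0)

lemma lambda_gf_convolution:
  assumes "j \<ge> 1"
  shows "(\<Sum>k=1..j-1. fps_nth lambda_gf (k + 1) / fact (j - k)) = (2 - (1/2) ^ j - (3/2) ^ j) / fact j"
proof -
  define c where "c i = fps_nth lambda_gf i * fps_nth (fps_exp 1 - 1) (Suc j - i)" for i
  have "(\<Sum>k=1..j-1. fps_nth lambda_gf (k + 1) / fact (j - k)) = (\<Sum>i=2..j. c i)"
    by (rule sum.reindex_bij_witness[where i="\<lambda>i. i - 1" and j="\<lambda>k. k + 1"])
       (auto simp: c_def Suc_diff_Suc)
  also have "\<dots> = (\<Sum>i=0..Suc j. c i)"
    by (rule sum.mono_neutral_left)
       (auto simp: c_def lambda_gf_nth_0 lambda_gf_nth_1[unfolded One_nat_def] not_le dest!: less_2_cases)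
  also have "\<dots> = (2 - (1/2) ^ j - (3/2) ^ j) / fact j"
    using lambda_gf_times_exp_minus_1_nth[of j] by (simp add: fps_mult_nth c_def atLeast0AtMost)
  finally show ?thesis .
qed

text \<open>Shifting \<open>\<Sum>\<^sub>k \<lambda>\<^sub>k n\<^sup>-\<^sup>k\<close> from \<open>n\<close> to \<open>n + 2\<close> reproduces the coefficients of
  \<open>d (n + 2) - d n\<close>: this is where the Bernoulli polynomials enter.\<close>
lemma lambda_shift_coeff_sum:
  assumes j: "j \<ge> 1"
  shows "(\<Sum>k=1..j-1. lambda_coeff k * shift_coeff k j) = defect_step_coeff j"
proof -
  have "lambda_coeff k * shift_coeff k j
          = (-1) ^ j * 2 ^ j * fact (j - 1) * (fps_nth lambda_gf (k + 1) / fact (j - k))"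
    if "k \<in> {1..j-1}" for k
  proof -
    from that have k: "1 \<le> k" "k \<le> j" by auto
    have "(-1::real) ^ k * (-1) ^ (j - k) = (-1) ^ j" "(2::real) ^ k * 2 ^ (j - k) = 2 ^ j"
      using k by (simp_all flip: power_add)
    then show ?thesis
      unfolding lambda_coeff_eq_lambda_gf[OF k(1)] shift_coeff_eq[OF k]
      by (simp add: field_simps)
  qed
  then have "(\<Sum>k=1..j-1. lambda_coeff k * shift_coeff k j)
      = (-1) ^ j * 2 ^ j * fact (j - 1) * (\<Sum>k=1..j-1. fps_nth lambda_gf (k + 1) / fact (j - k))"
    by (simp add: sum_distrib_left)
  also have "\<dots> = (-1) ^ j * (2 * 2 ^ j - (2 * (1/2)) ^ j - (2 * (3/2)) ^ j) / real j"
    unfolding lambda_gf_convolution[OF j]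
    using j by (simp add: fact_reduce[of j] power_mult_distrib field_simps)
  also have "\<dots> = defect_step_coeff j"
    using j by (simp add: defect_step_coeff_def ln_one_plus_coeff_def power_minus' field_simps)
  finally show ?thesis .
qed

lemma lambda_shift_coeff_sum_upto:
  assumes "1 \<le> j" "j \<le> M + 1"
  shows "(\<Sum>k=1..M. lambda_coeff k * shift_coeff k j)
           = defect_step_coeff j + (if j \<le> M then lambda_coeff j else 0)"
proof (cases "j \<le> M")
  case True
  have "(\<Sum>k=1..M. lambda_coeff k * shift_coeff k j) = (\<Sum>k=1..j. lambda_coeff k * shift_coeff k j)"
    using True by (intro sum.mono_neutral_right) (auto simp: shift_coeff_def)
  also have "\<dots> = (\<Sum>k=1..j-1. lambda_coeff k * shift_coeff k j) + lambda_coeff j"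
    using assms by (cases j) (auto simp: shift_coeff_def)
  finally show ?thesis
    using True assms lambda_shift_coeff_sum by simp
next
  case False
  then have "j = M + 1" using assms by simp
  then show ?thesis
    using lambda_shift_coeff_sum[of j] by simp
qed

definition lambda_sum :: "nat \<Rightarrow> nat \<Rightarrow> real" where
  "lambda_sum M n = (\<Sum>k=1..M. lambda_coeff k / real n ^ k)"

lemma lambda_sum_tendsto_0: "lambda_sum M \<longlonglongrightarrow> 0"
proof -
  have "(\<lambda>n. \<Sum>k=1..M. lambda_coeff k * (1 / real n) ^ k) \<longlonglongrightarrow> (\<Sum>k=1..M. lambda_coeff k * 0 ^ k)"
    by (intro tendsto_intros lim_inverse_n')
  then show ?thesis
    by (simp add: lambda_sum_def[abs_def] power_one_over)
qed

lemma lambda_sum_shift_coeff_eq: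
  "(\<Sum>k=1..M. lambda_coeff k * (\<Sum>j=1..M+1. shift_coeff k j / real n ^ j))
     = (\<Sum>j=1..M+1. defect_step_coeff j / real n ^ j) + lambda_sum M n"
proof -
  have "(\<Sum>k=1..M. lambda_coeff k * (\<Sum>j=1..M+1. shift_coeff k j / real n ^ j))
      = (\<Sum>j=1..M+1. (\<Sum>k=1..M. lambda_coeff k * shift_coeff k j) / real n ^ j)"
    unfolding sum_distrib_left times_divide_eq_right sum_divide_distrib by (rule sum.swap)
  also have "\<dots> = (\<Sum>j=1..M+1. defect_step_coeff j / real n ^ j
                     + (if j \<le> M then lambda_coeff j / real n ^ j else 0))"
  proof (rule sum.cong[OF refl])
    fix j assume "j \<in> {1..M+1}"
    then show "(\<Sum>k=1..M. lambda_coeff k * shift_coeff k j) / real n ^ j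
        = defect_step_coeff j / real n ^ j + (if j \<le> M then lambda_coeff j / real n ^ j else 0)"
      using lambda_shift_coeff_sum_upto[of j M] by (simp add: add_divide_distrib)
  qed
  also have "\<dots> = (\<Sum>j=1..M+1. defect_step_coeff j / real n ^ j) + lambda_sum M n"
    by (simp add: sum.distrib sum.If_cases lambda_sum_def atLeastAtMost_iff)
  finally show ?thesis .
qed

lemma lambda_sum_step_expansion:
  "(\<lambda>n. (lambda_sum M (n + 2) - lambda_sum M n) - (\<Sum>j=1..M+1. defect_step_coeff j / real n ^ j))
     \<in> O(\<lambda>n. 1 / real n ^ (M + 2))"
proof -
  have "(\<lambda>n. \<Sum>k=1..M. lambda_coeff k * (1 / real (n + 2) ^ k - (\<Sum>j=1..M+1. shift_coeff k j / real n ^ j)))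
          \<in> O(\<lambda>n. 1 / real n ^ (M + 2))"
    using inverse_shifted_power_expansion[of _ "M + 1"] by (intro big_sum_in_bigo) simp
  also have "(\<lambda>n. \<Sum>k=1..M. lambda_coeff k * (1 / real (n + 2) ^ k - (\<Sum>j=1..M+1. shift_coeff k j / real n ^ j)))
      = (\<lambda>n. (lambda_sum M (n + 2) - lambda_sum M n) - (\<Sum>j=1..M+1. defect_step_coeff j / real n ^ j))"
  proof
    fix n
    have "(\<Sum>k=1..M. lambda_coeff k * (1 / real (n + 2) ^ k)) = lambda_sum M (n + 2)"
      by (simp add: lambda_sum_def)
    then show "(\<Sum>k=1..M. lambda_coeff k * (1 / real (n + 2) ^ k - (\<Sum>j=1..M+1. shift_coeff k j / real n ^ j)))
        = (lambda_sum M (n + 2) - lambda_sum M n) - (\<Sum>j=1..M+1. defect_step_coeff j / real n ^ j)"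
      unfolding right_diff_distrib sum_subtractf lambda_sum_shift_coeff_eq by simp
  qed
  finally show ?thesis .
qed

lemma ln_Gamma_defect_expansion:
  "(\<lambda>n. ln_Gamma_defect n - lambda_sum M n) \<in> O(\<lambda>n. 1 / real n ^ (M + 1))"
proof (rule bigo_from_step2_differences)
  show "(\<lambda>n. ln_Gamma_defect n - lambda_sum M n) \<longlonglongrightarrow> 0"
    using tendsto_diff[OF ln_Gamma_defect_tendsto_0 lambda_sum_tendsto_0] by simp
  have "(\<lambda>n. ((ln_Gamma_defect (n + 2) - ln_Gamma_defect n) - (\<Sum>j=1..M+1. defect_step_coeff j / real n ^ j))
           - ((lambda_sum M (n + 2) - lambda_sum M n) - (\<Sum>j=1..M+1. defect_step_coeff j / real n ^ j)))
          \<in> O(\<lambda>n. 1 / real n ^ (M + 2))"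
    by (intro sum_in_bigo defect_step_expansion lambda_sum_step_expansion)
  then show "(\<lambda>n. (ln_Gamma_defect (n + 2) - lambda_sum M (n + 2)) - (ln_Gamma_defect n - lambda_sum M n))
               \<in> O(\<lambda>n. 1 / real n ^ (M + 2))"
    by (simp add: algebra_simps)
qed

lemma ln_coeff_product_expansion:
  fixes t :: "nat \<Rightarrow> real"
  assumes sys: "\<And>m. m \<ge> 1 \<Longrightarrow>
                 (\<Sum>j=1..m. (-1) ^ (j + 1) * t (m - j) / real j) = lambda_coeff m"
  shows "(\<lambda>n. (\<Sum>i\<le>N + 1. ln_one_plus_coeff 1 i / real n ^ i) * (\<Sum>j=0..N. t j / real n ^ j)
             - lambda_sum (N + 1) n) \<in> O(\<lambda>n. 1 / real n ^ (N + 2))"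
proof -
  define a where "a = ln_one_plus_coeff 1"
  define b where "b j = (if j \<le> N then t j else 0)" for j
  have a0: "a 0 = 0" by (simp add: a_def ln_one_plus_coeff_def)
  have "(\<Sum>j=0..N. t j / real n ^ j) = (\<Sum>j\<le>N + 1. b j / real n ^ j)" for n
    by (simp add: b_def atMost_atLeast0)
  moreover have "(\<Sum>i\<le>m. a i * b (m - i)) = lambda_coeff m" if "1 \<le> m" "m \<le> N + 1" for m
  proof -
    have "(\<Sum>i\<le>m. a i * b (m - i)) = (\<Sum>i=1..m. a i * t (m - i))"
      using that a0 by (auto simp: atMost_atLeast0 sum.atLeast_Suc_atMost b_def intro!: sum.cong)
    also have "\<dots> = lambda_coeff m"
      using sys[OF that(1)] by (simp add: a_def ln_one_plus_coeff_def)
    finally show ?thesis .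
  qed
  then have "(\<Sum>m\<le>N + 1. (\<Sum>i\<le>m. a i * b (m - i)) / real n ^ m) = lambda_sum (N + 1) n" for n
    unfolding lambda_sum_def using a0
    by (intro sum.mono_neutral_cong_right) (auto simp: Suc_le_eq)
  ultimately show ?thesis
    using truncated_product_bigo[of a "N + 1" b] by (simp add: a_def)
qed

lemma ln_times_series_expansion:
  fixes t :: "nat \<Rightarrow> real"
  assumes sys: "\<And>m. m \<ge> 1 \<Longrightarrow>
                 (\<Sum>j=1..m. (-1) ^ (j + 1) * t (m - j) / real j) = lambda_coeff m"
  shows "(\<lambda>n. ln (1 + 1 / real n) * (\<Sum>j=0..N. t j / real n ^ j) - lambda_sum (N + 1) n)
           \<in> O(\<lambda>n. 1 / real n ^ (N + 2))"
proof -
  define S where "S n = (\<Sum>i\<le>N + 1. ln_one_plus_coeff 1 i / real n ^ i)" for n :: nat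
  define T where "T n = (\<Sum>j=0..N. t j / real n ^ j)" for n :: nat
  have "(\<lambda>n. ln (1 + 1 / real n) - S n) \<in> O(\<lambda>n. 1 / real n ^ (N + 2))"
    using ln_one_plus_expansion[of 1 "N + 1"]
    by (simp add: S_def atMost_atLeast0 sum.atLeast_Suc_atMost ln_one_plus_coeff_def)
  moreover have "T \<in> O(\<lambda>_. 1)"
    unfolding T_def using inverse_power_bigo[of 0]
    by (intro big_sum_in_bigo) (simp add: divide_inverse power_inverse)
  ultimately have "(\<lambda>n. (ln (1 + 1 / real n) - S n) * T n) \<in> O(\<lambda>n. 1 / real n ^ (N + 2) * 1)"
    by (rule landau_o.big.mult)
  then have "(\<lambda>n. (ln (1 + 1 / real n) - S n) * T n) \<in> O(\<lambda>n. 1 / real n ^ (N + 2))"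
    by simp
  moreover have "(\<lambda>n. S n * T n - lambda_sum (N + 1) n) \<in> O(\<lambda>n. 1 / real n ^ (N + 2))"
    unfolding S_def T_def by (rule ln_coeff_product_expansion[OF sys])
  ultimately have "(\<lambda>n. (ln (1 + 1 / real n) - S n) * T n + (S n * T n - lambda_sum (N + 1) n))
               \<in> O(\<lambda>n. 1 / real n ^ (N + 2))"
    by (rule sum_in_bigo)
  then show ?thesis by (simp add: T_def algebra_simps)
qed

theorem theorem17:
  fixes t :: "nat \<Rightarrow> real"
  assumes t0: "t 0 = 1/2"
    and sys: "\<And>m. m \<ge> 1 \<Longrightarrow>
               (\<Sum>j=1..m. (-1) ^ (j + 1) * t (m - j) / real j) = lambda_coeff m"
  shows "\<forall>N::nat. (\<lambda>n::nat. ln (Omega n ^ 2 / (Omega (n - 1) * Omega (n + 1)))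
             - ln (1 + 1 / real n) * (\<Sum>j=0..N. t j / real n ^ j))
           \<in> O[sequentially](\<lambda>n::nat. 1 / real n ^ (N + 2))"
proof
  \<comment> \<open>\<open>t0\<close> is not needed: the case \<open>m = 1\<close> of \<open>sys\<close> already forces
    \<open>t 0 = lambda_coeff 1 = 1/2\<close>.\<close>
  fix N :: nat
  have "(\<lambda>n. ln_Gamma_defect n - lambda_sum (N + 1) n) \<in> O(\<lambda>n. 1 / real n ^ (N + 2))"
    using ln_Gamma_defect_expansion[of "N + 1"] by simp
  then have "(\<lambda>n. (ln_Gamma_defect n - lambda_sum (N + 1) n)
        - (ln (1 + 1 / real n) * (\<Sum>j=0..N. t j / real n ^ j) - lambda_sum (N + 1) n))
      \<in> O(\<lambda>n. 1 / real n ^ (N + 2))"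
    using ln_times_series_expansion[OF sys] by (rule sum_in_bigo)
  then show "(\<lambda>n::nat. ln (Omega n ^ 2 / (Omega (n - 1) * Omega (n + 1)))
             - ln (1 + 1 / real n) * (\<Sum>j=0..N. t j / real n ^ j))
           \<in> O[sequentially](\<lambda>n::nat. 1 / real n ^ (N + 2))"
    by (rule bigo_eventually_cong)
       (use ln_Omega_ratio_eq_ln_Gamma_defect in \<open>auto intro: eventually_sequentiallyI[of 1]\<close>)
qed

end
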